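(* Let $p$ be a prime and $l \ge 1$ an integer with $l \mid (p-1)$, and set $q = pl$. For $\Delta \in Z_q$ let $\omega_\Delta : Z_q \to Z_q$, $u \mapsto (u+\Delta) \bmod q$. Then $$ P = \{\omega_{1+il} : i \in \{0,1,\ldots,p-1\},\ i \neq (p-1)/l\} $$ consists of $p-1$ distinct cyclic permutations of $Z_q$ with orbit $Z_q$, $P$ is a $(pl,l)$-proper set, and $|P| = p-1 = \lfloor (pl-1)/l \rfloor$, i.e. $P$ attains the upper bound $|P| \le \lfloor (q-1)/l \rfloor$ valid for every $(q,l)$-proper set (so $P$ is quasiperfect).
   Context: Let $Z_q = \{0,1,\ldots,q-1\}$. A permutation $\sigma$ of $Z_q$ is called cyclic with orbit $Z_q$ if it consists of a single cycle containing all $q$ elements. For a permutation $\sigma$, $\sigma^\beta$ denotes its $\beta$-fold composition with itself. A set $P$ of cyclic permutations of $Z_q$ with orbit $Z_q$ is called $(q,l)$-proper (for an integer $l$ with $1 \le l < q$) if for every ordered pair $(u,v) \in Z_q^2$ there is at most one $\sigma \in P$ such that $v = \sigma^\beta[u]$ for some $\beta \in \{1,\ldots,l\}$. A $(q,l)$-proper set is called quasiperfect if $|P| = \lfloor (q-1)/l \rfloor$. *)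

theory Defs
  imports "HOL-Combinatorics.Permutations" "HOL-Computational_Algebra.Primes"
begin

text \<open>Z_q is represented as the set {0..<q} of naturals. A permutation of Z_q is a
function nat => nat that permutes {0..<q} (and fixes everything outside).\<close>

definition cyclic_perm :: "nat \<Rightarrow> (nat \<Rightarrow> nat) \<Rightarrow> bool" where
  "cyclic_perm q \<sigma> \<longleftrightarrow> \<sigma> permutes {0..<q} \<and>
     (\<forall>u<q. \<forall>v<q. \<exists>k::nat. (\<sigma> ^^ k) u = v)"

definition proper_set :: "nat \<Rightarrow> nat \<Rightarrow> (nat \<Rightarrow> nat) set \<Rightarrow> bool" where
  "proper_set q l P \<longleftrightarrow> 1 \<le> l \<and> l < q \<and> (\<forall>\<sigma>\<in>P. cyclic_perm q \<sigma>) \<and>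
     (\<forall>u<q. \<forall>v<q. \<forall>\<sigma>\<in>P. \<forall>\<tau>\<in>P.
        (\<exists>\<beta>\<in>{1..l}. (\<sigma> ^^ \<beta>) u = v) \<longrightarrow> (\<exists>\<beta>\<in>{1..l}. (\<tau> ^^ \<beta>) u = v) \<longrightarrow> \<sigma> = \<tau>)"

definition quasiperfect :: "nat \<Rightarrow> nat \<Rightarrow> (nat \<Rightarrow> nat) set \<Rightarrow> bool" where
  "quasiperfect q l P \<longleftrightarrow> proper_set q l P \<and> card P = (q - 1) div l"

definition omega :: "nat \<Rightarrow> nat \<Rightarrow> nat \<Rightarrow> nat" where
  "omega q \<Delta> u = (if u < q then (u + \<Delta>) mod q else u)"

end

theory Submission
  imports Defs "HOL-Number_Theory.Number_Theory"
begin

text \<open>The shift by \<Delta> is a single q-cycle when \<Delta> is coprime to q, and its \<beta>-th iterate is the shift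
  by \<beta> \<Delta>. Properness of a family of shifts therefore only asks that the multiples \<beta> \<Delta>
  (1 \<le> \<beta> \<le> l) of distinct steps \<Delta> never agree modulo q. For the steps 1 + i l modulo p l,
  reducing modulo l recovers \<beta>, and reducing modulo p then recovers i because 0 < \<beta> < p; the
  steps are coprime to p l except for i = (p - 1) / l, where p divides 1 + i l.
  Conversely, in any proper set the orbit segments of length l starting at 0 are pairwise
  disjoint l-element sets of nonzero residues, which gives the upper bound (q - 1) div l.\<close>

lemma cyclic_perm_permutes: "cyclic_perm q \<sigma> \<Longrightarrow> \<sigma> permutes {0..<q}"
  by (simp add: cyclic_perm_def)

lemma cyclic_perm_funpow_less:
  assumes "cyclic_perm q \<sigma>" and "u < q"
  shows "(\<sigma> ^^ n) u < q"
  using assms permutes_in_image[OF cyclic_perm_permutes[OF assms(1)]]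
  by (induction n) auto

text \<open>If two of the first q iterates at u coincided, the orbit of u would have fewer than q
  elements, but cyclicity makes it all of Z_q.\<close>
lemma cyclic_perm_funpow_neq:
  assumes c: "cyclic_perm q \<sigma>" and u: "u < q" and ab: "a < b" "b < q"
  shows "(\<sigma> ^^ a) u \<noteq> (\<sigma> ^^ b) u"
proof
  assume eq: "(\<sigma> ^^ a) u = (\<sigma> ^^ b) u"
  define d where "d = b - a"
  have d: "0 < d" "d < q" using ab by (auto simp: d_def)
  have "inj (\<sigma> ^^ a)"
    using permutes_inj[OF cyclic_perm_permutes[OF c]] by (rule inj_fn)
  moreover have "(\<sigma> ^^ a) ((\<sigma> ^^ d) u) = (\<sigma> ^^ a) u"
    using eq ab(1) by (simp add: d_def flip: funpow_add[THEN fun_cong, unfolded comp_def])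
  ultimately have period: "(\<sigma> ^^ d) u = u" by (simp add: inj_eq)
  have "{0..<q} \<subseteq> (\<lambda>k. (\<sigma> ^^ k) u) ` {0..<d}"
  proof
    fix v assume "v \<in> {0..<q}"
    then obtain k where "(\<sigma> ^^ k) u = v" using c u unfolding cyclic_perm_def by auto
    then have "(\<sigma> ^^ (k mod d)) u = v" using funpow_mod_eq[OF period] by simp
    then show "v \<in> (\<lambda>k. (\<sigma> ^^ k) u) ` {0..<d}" using d by force
  qed
  then have "card {0..<q} \<le> card ((\<lambda>k. (\<sigma> ^^ k) u) ` {0..<d})"
    by (intro card_mono) auto
  also have "\<dots> \<le> d" using card_image_le[of "{0..<d}"] by simp
  finally show False using d by simp
qed

definition orbit_segment :: "(nat \<Rightarrow> nat) \<Rightarrow> nat \<Rightarrow> nat \<Rightarrow> nat set" where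
  "orbit_segment \<sigma> l u = (\<lambda>\<beta>. (\<sigma> ^^ \<beta>) u) ` {1..l}"

lemma card_orbit_segment:
  assumes "cyclic_perm q \<sigma>" and "u < q" and "l < q"
  shows "card (orbit_segment \<sigma> l u) = l"
proof -
  have "inj_on (\<lambda>\<beta>. (\<sigma> ^^ \<beta>) u) {1..l}"
  proof (rule inj_onI)
    fix a b assume "a \<in> {1..l}" "b \<in> {1..l}" "(\<sigma> ^^ a) u = (\<sigma> ^^ b) u"
    then show "a = b"
      using cyclic_perm_funpow_neq[OF assms(1,2), of a b] cyclic_perm_funpow_neq[OF assms(1,2), of b a]
        assms(3) by (metis atLeastAtMost_iff le_less_trans linorder_neqE_nat)
  qed
  then show ?thesis by (simp add: orbit_segment_def card_image)
qed

lemma orbit_segment_subset: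
  assumes "cyclic_perm q \<sigma>" and "u < q" and "l < q"
  shows "orbit_segment \<sigma> l u \<subseteq> {0..<q} - {u}"
proof
  fix v assume "v \<in> orbit_segment \<sigma> l u"
  then obtain \<beta> where \<beta>: "1 \<le> \<beta>" "\<beta> \<le> l" and v: "v = (\<sigma> ^^ \<beta>) u"
    by (auto simp: orbit_segment_def)
  have "v < q" using v cyclic_perm_funpow_less[OF assms(1,2)] by simp
  moreover have "v \<noteq> u"
    using cyclic_perm_funpow_neq[OF assms(1,2), of 0 \<beta>] \<beta> v assms(3) by simp
  ultimately show "v \<in> {0..<q} - {u}" by simp
qed

lemma proper_set_eqI:
  assumes proper: "proper_set q l Q" and "\<sigma> \<in> Q" "\<tau> \<in> Q" "u < q"
    and "\<beta> \<in> {1..l}" "\<beta>' \<in> {1..l}" and eq: "(\<sigma> ^^ \<beta>) u = (\<tau> ^^ \<beta>') u"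
  shows "\<sigma> = \<tau>"
proof -
  from proper have "cyclic_perm q \<sigma>" using assms(2) by (simp add: proper_set_def)
  then have v: "(\<sigma> ^^ \<beta>) u < q" using cyclic_perm_funpow_less assms(4) by blast
  from proper have "\<forall>u<q. \<forall>v<q. \<forall>\<sigma>\<in>Q. \<forall>\<tau>\<in>Q. (\<exists>\<beta>\<in>{1..l}. (\<sigma> ^^ \<beta>) u = v) \<longrightarrow>
      (\<exists>\<beta>\<in>{1..l}. (\<tau> ^^ \<beta>) u = v) \<longrightarrow> \<sigma> = \<tau>"
    unfolding proper_set_def by (elim conjE) assumption
  note unique = this[rule_format, OF assms(4) v assms(2,3)]
  have "\<exists>b\<in>{1..l}. (\<sigma> ^^ b) u = (\<sigma> ^^ \<beta>) u" using assms(5) by blast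
  moreover have "\<exists>b\<in>{1..l}. (\<tau> ^^ b) u = (\<sigma> ^^ \<beta>) u" using assms(6) eq by metis
  ultimately show ?thesis by (rule unique)
qed

lemma proper_set_orbit_segments_disjoint:
  assumes "proper_set q l Q" and "\<sigma> \<in> Q" "\<tau> \<in> Q" "\<sigma> \<noteq> \<tau>" and "u < q"
  shows "orbit_segment \<sigma> l u \<inter> orbit_segment \<tau> l u = {}"
proof -
  have "v \<notin> orbit_segment \<tau> l u" if "v \<in> orbit_segment \<sigma> l u" for v
  proof
    assume "v \<in> orbit_segment \<tau> l u"
    with that obtain \<beta> \<beta>' where "\<beta> \<in> {1..l}" "\<beta>' \<in> {1..l}" "(\<sigma> ^^ \<beta>) u = (\<tau> ^^ \<beta>') u"
      unfolding orbit_segment_def by blast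
    then show False using proper_set_eqI[OF assms(1-3,5)] assms(4) by blast
  qed
  then show ?thesis by blast
qed

lemma proper_set_card_le:
  assumes proper: "proper_set q l Q"
  shows "card Q \<le> (q - 1) div l"
proof -
  have l: "1 \<le> l" "l < q" and cyc: "\<And>\<sigma>. \<sigma> \<in> Q \<Longrightarrow> cyclic_perm q \<sigma>"
    using proper by (auto simp: proper_set_def)
  have "Q \<subseteq> {\<sigma>. \<sigma> permutes {0..<q}}" using cyc cyclic_perm_permutes by blast
  then have "finite Q" using finite_permutations finite_subset by blast
  then have "card (\<Union>\<sigma>\<in>Q. orbit_segment \<sigma> l 0) = (\<Sum>\<sigma>\<in>Q. card (orbit_segment \<sigma> l 0))"
    using proper_set_orbit_segments_disjoint[OF proper] l
    by (intro card_UN_disjoint) (auto simp: orbit_segment_def)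
  also have "\<dots> = card Q * l"
    using card_orbit_segment[OF cyc] l by simp
  finally have "card Q * l = card (\<Union>\<sigma>\<in>Q. orbit_segment \<sigma> l 0)" by simp
  also have "\<dots> \<le> card ({0..<q} - {0})"
    using orbit_segment_subset[OF cyc] l by (intro card_mono) auto
  finally have "card Q * l \<le> q - 1" using l by simp
  then show ?thesis using l by (simp add: less_eq_div_iff_mult_less_eq)
qed

lemma omega_funpow:
  assumes "u < q"
  shows "(omega q \<Delta> ^^ k) u = (u + k * \<Delta>) mod q"
proof (induction k)
  case 0
  then show ?case using assms by simp
next
  case (Suc k)
  have "(u + k * \<Delta>) mod q < q" using assms by simp
  then show ?case using Suc by (simp add: omega_def mod_add_right_eq algebra_simps)
qed

lemma inj_on_omega: "inj_on (omega q) {..<q}"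
proof (rule inj_onI)
  fix \<Delta> \<Delta>' assume "\<Delta> \<in> {..<q}" "\<Delta>' \<in> {..<q}" and eq: "omega q \<Delta> = omega q \<Delta>'"
  have "omega q \<Delta> 0 = omega q \<Delta>' 0" by (simp only: eq)
  with \<open>\<Delta> \<in> {..<q}\<close> \<open>\<Delta>' \<in> {..<q}\<close> show "\<Delta> = \<Delta>'" by (simp add: omega_def)
qed

lemma omega_permutes:
  assumes "0 < q"
  shows "omega q \<Delta> permutes {0..<q}"
proof -
  have inj: "inj_on (omega q \<Delta>) {0..<q}"
    by (intro inj_onI) (auto simp: omega_def cong_add_rcancel_nat cong_less_modulus_unique_nat
                             simp flip: cong_def)
  have "omega q \<Delta> ` {0..<q} \<subseteq> {0..<q}" using assms by (auto simp: omega_def)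
  with inj have "bij_betw (omega q \<Delta>) {0..<q} {0..<q}"
    by (simp add: bij_betw_def endo_inj_surj)
  then show ?thesis by (rule bij_imp_permutes) (simp add: omega_def)
qed

text \<open>With x an inverse of \<Delta> modulo q, (v + q - u) x steps lead from u to v.\<close>
lemma cyclic_perm_omega:
  assumes "0 < q" and "coprime \<Delta> q"
  shows "cyclic_perm q (omega q \<Delta>)"
proof -
  obtain x where x: "[\<Delta> * x = 1] (mod q)" using cong_solve_coprime_nat[OF assms(2)] by auto
  have "(omega q \<Delta> ^^ (x * (v + q - u))) u = v" if u: "u < q" and v: "v < q" for u v
  proof -
    have "[u + x * (v + q - u) * \<Delta> = u + (v + q - u) * (\<Delta> * x)] (mod q)"
      by (simp add: algebra_simps)
    also have "[u + (v + q - u) * (\<Delta> * x) = u + (v + q - u) * 1] (mod q)"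
      using x by (intro cong_add cong_mult) auto
    also have "u + (v + q - u) * 1 = v + q" using u by simp
    also have "[v + q = v] (mod q)" by (simp add: cong_def)
    finally show ?thesis using omega_funpow[OF u] v by (simp add: cong_def)
  qed
  then show ?thesis using omega_permutes[OF assms(1)] by (auto simp: cyclic_perm_def)
qed

lemma proper_set_omega_image:
  assumes "1 \<le> l" "l < q"
    and coprime: "\<And>\<Delta>. \<Delta> \<in> D \<Longrightarrow> coprime \<Delta> q"
    and steps_unique: "\<And>\<Delta> \<Delta>' \<beta> \<beta>'. \<lbrakk>\<Delta> \<in> D; \<Delta>' \<in> D; \<beta> \<in> {1..l}; \<beta>' \<in> {1..l};
                         [\<beta> * \<Delta> = \<beta>' * \<Delta>'] (mod q)\<rbrakk> \<Longrightarrow> \<Delta> = \<Delta>'"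
  shows "proper_set q l (omega q ` D)"
proof -
  have cyclic: "cyclic_perm q \<sigma>" if "\<sigma> \<in> omega q ` D" for \<sigma>
    using that cyclic_perm_omega[OF _ coprime] assms(2) by auto
  have unique: "\<sigma> = \<tau>"
    if u: "u < q" and "\<sigma> \<in> omega q ` D" "\<tau> \<in> omega q ` D"
      and "\<exists>\<beta>\<in>{1..l}. (\<sigma> ^^ \<beta>) u = v" "\<exists>\<beta>\<in>{1..l}. (\<tau> ^^ \<beta>) u = v" for u v \<sigma> \<tau>
  proof -
    from that(2,3) obtain \<Delta> \<Delta>' where \<Delta>: "\<Delta> \<in> D" "\<sigma> = omega q \<Delta>"
      and \<Delta>': "\<Delta>' \<in> D" "\<tau> = omega q \<Delta>'" by blast
    from that(4,5) obtain \<beta> \<beta>' where \<beta>: "\<beta> \<in> {1..l}" "(\<sigma> ^^ \<beta>) u = v"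
      and \<beta>': "\<beta>' \<in> {1..l}" "(\<tau> ^^ \<beta>') u = v" by blast
    have "[u + \<beta> * \<Delta> = u + \<beta>' * \<Delta>'] (mod q)"
      using \<beta> \<beta>' \<Delta> \<Delta>' by (simp add: omega_funpow[OF u] cong_def)
    then have "\<Delta> = \<Delta>'"
      using steps_unique[OF \<Delta>(1) \<Delta>'(1) \<beta>(1) \<beta>'(1)] by (simp add: cong_add_lcancel_nat)
    then show ?thesis using \<Delta> \<Delta>' by simp
  qed
  show ?thesis
    unfolding proper_set_def using assms(1,2) cyclic unique by blast
qed

lemma cong_nat_eq_if_dist_less:
  fixes x y n :: nat
  assumes "[x = y] (mod n)" and "x < y + n" and "y < x + n"
  shows "x = y"
proof (rule ccontr)
  assume "x \<noteq> y"
  then consider "x < y" | "y < x" by linarith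
  then show False
  proof cases
    case 1
    then have "n dvd y - x" using assms(1) cong_altdef_nat cong_sym less_imp_le by blast
    then show False using 1 assms(3) nat_dvd_not_less[of "y - x" n] by simp
  next
    case 2
    then have "n dvd x - y" using assms(1) cong_altdef_nat less_imp_le by blast
    then show False using 2 assms(2) nat_dvd_not_less[of "x - y" n] by simp
  qed
qed

lemma coprime_one_plus_mult: "coprime (1 + k * l) (l :: nat)"
proof -
  have "gcd l (k * l + 1) = 1" using gcd_add_mult[of l k 1] by simp
  then show ?thesis by (metis add.commute coprime_commute coprime_iff_gcd_eq_1)
qed

lemma mult_minus_one_div:
  fixes p l :: nat
  assumes "0 < p" "0 < l"
  shows "(p * l - 1) div l = p - 1"
  using assms by (intro div_nat_eqI) (auto simp: algebra_simps)

context
  fixes p l :: nat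
  assumes prime: "prime p" and l: "1 \<le> l" "l dvd p - 1"
begin

lemma shift_step_less:
  assumes "i < p" "i \<noteq> (p - 1) div l"
  shows "1 + i * l < p * l"
proof (cases "l = 1")
  case True
  then show ?thesis using assms by simp
next
  case False
  have "i \<le> p - 1" using assms(1) by simp
  then have "i * l \<le> p * l - l" using mult_le_mono1[of i "p - 1" l] by (simp add: diff_mult_distrib)
  moreover have "l \<le> p * l" using prime_gt_0_nat[OF prime] by simp
  ultimately show ?thesis using False l(1) by linarith
qed

text \<open>The step 1 + i l is divisible by p exactly for i = (p - 1) / l, the one index excluded.\<close>
lemma coprime_shift_step:
  assumes "i < p" "i \<noteq> (p - 1) div l"
  shows "coprime (1 + i * l) (p * l)"
proof -
  define m where "m = (p - 1) div l"
  have p: "1 + m * l = p" using l prime_gt_0_nat[OF prime] by (simp add: m_def)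
  have "m \<le> m * l" using l(1) by simp
  then have "m < p" using p by linarith
  have "coprime l p" using coprime_one_plus_mult[of m l] by (metis p coprime_commute)
  have "\<not> p dvd 1 + i * l"
  proof
    assume "p dvd 1 + i * l"
    then have "[1 + i * l = 0] (mod p)" by (simp add: cong_0_iff)
    moreover have "[1 + m * l = 0] (mod p)" unfolding p by (simp add: cong_0_iff)
    ultimately have "[1 + i * l = 1 + m * l] (mod p)" by (rule cong_trans[OF _ cong_sym])
    then have "[i * l = m * l] (mod p)" by (simp only: cong_add_lcancel_nat)
    then have "[i = m] (mod p)" using \<open>coprime l p\<close> by (simp add: cong_mult_rcancel_nat)
    then show False using assms \<open>m < p\<close> by (simp add: m_def cong_less_modulus_unique_nat)
  qed
  then have "coprime (1 + i * l) p" using prime by (simp add: prime_imp_coprime coprime_commute)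
  moreover have "coprime (1 + i * l) l" by (rule coprime_one_plus_mult)
  ultimately show ?thesis by simp
qed

text \<open>Reducing mod l gives \<beta> = \<beta>'; then p divides \<beta> (i - j) with 0 < \<beta> < p.\<close>
lemma shift_step_multiples_cong_imp_eq:
  assumes "\<beta> \<in> {1..l}" "\<beta>' \<in> {1..l}" "i < p" "j < p"
    and cong: "[\<beta> * (1 + i * l) = \<beta>' * (1 + j * l)] (mod p * l)"
  shows "i = j"
proof -
  have lp: "l < p" using l prime_gt_1_nat[OF prime] dvd_imp_le[OF l(2)] by linarith
  have reduce: "[b * (1 + k * l) = b] (mod l)" for b k :: nat
    by (simp add: cong_def distrib_left flip: mult.assoc)
  have "[\<beta> = \<beta> * (1 + i * l)] (mod l)" using reduce by (rule cong_sym)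
  also have "[\<beta> * (1 + i * l) = \<beta>' * (1 + j * l)] (mod l)"
    using cong by (rule cong_dvd_modulus_nat) simp
  also have "[\<beta>' * (1 + j * l) = \<beta>'] (mod l)" by (rule reduce)
  finally have "[\<beta> = \<beta>'] (mod l)" .
  then have \<beta>: "\<beta>' = \<beta>"
    by (rule cong_nat_eq_if_dist_less[OF cong_sym]) (use assms(1,2) in auto)
  have "[\<beta> * i * l = \<beta> * j * l] (mod p * l)"
    using cong by (simp add: \<beta> algebra_simps cong_add_lcancel_nat)
  then have "[\<beta> * i = \<beta> * j] (mod p)" using l(1) by (simp add: cong_def mod_mult_mult2)
  moreover have "\<not> p dvd \<beta>" using assms(1) lp nat_dvd_not_less[of \<beta> p] by simp
  then have "coprime \<beta> p" using prime_imp_coprime[OF prime] by (simp add: coprime_commute)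
  ultimately have "[i = j] (mod p)" by (simp add: cong_mult_lcancel_nat)
  then show ?thesis using assms(3,4) by (simp add: cong_less_modulus_unique_nat)
qed


lemma inj_on_shift_family:
  "inj_on (\<lambda>i. omega (p * l) (1 + i * l)) ({0..<p} - {(p - 1) div l})"
proof -
  have "inj_on (omega (p * l) \<circ> (\<lambda>i. 1 + i * l)) ({0..<p} - {(p - 1) div l})"
  proof (rule comp_inj_on)
    show "inj_on (\<lambda>i. 1 + i * l) ({0..<p} - {(p - 1) div l})"
      using l(1) by (intro inj_onI) simp
    show "inj_on (omega (p * l)) ((\<lambda>i. 1 + i * l) ` ({0..<p} - {(p - 1) div l}))"
      by (rule inj_on_subset[OF inj_on_omega], intro image_subsetI)
         (simp add: shift_step_less del: One_nat_def)
  qed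
  then show ?thesis by (simp add: comp_def)
qed

lemma card_shift_family:
  "card ((\<lambda>i. omega (p * l) (1 + i * l)) ` ({0..<p} - {(p - 1) div l})) = p - 1"
proof -
  have "(p - 1) div l < p" using prime_gt_1_nat[OF prime] div_le_dividend[of "p - 1" l] by linarith
  then show ?thesis using inj_on_shift_family by (simp add: card_image)
qed

lemma proper_set_shift_family:
  "proper_set (p * l) l ((\<lambda>i. omega (p * l) (1 + i * l)) ` ({0..<p} - {(p - 1) div l}))"
proof -
  define I where "I = {0..<p} - {(p - 1) div l}"
  have I: "i < p" "i \<noteq> (p - 1) div l" if "i \<in> I" for i using that by (auto simp: I_def)
  have "proper_set (p * l) l (omega (p * l) ` (\<lambda>i. 1 + i * l) ` I)"
  proof (rule proper_set_omega_image)
    show "l < p * l" using prime_gt_1_nat[OF prime] l(1) by simp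
    show "coprime \<Delta> (p * l)" if "\<Delta> \<in> (\<lambda>i. 1 + i * l) ` I" for \<Delta>
      using that coprime_shift_step I by auto
    show "\<Delta> = \<Delta>'"
      if steps: "\<Delta> \<in> (\<lambda>i. 1 + i * l) ` I" "\<Delta>' \<in> (\<lambda>i. 1 + i * l) ` I"
        and \<beta>: "\<beta> \<in> {1..l}" "\<beta>' \<in> {1..l}" and cong: "[\<beta> * \<Delta> = \<beta>' * \<Delta>'] (mod p * l)"
      for \<Delta> \<Delta>' \<beta> \<beta>'
    proof -
      obtain i j where "i \<in> I" "j \<in> I" and \<Delta>: "\<Delta> = 1 + i * l" "\<Delta>' = 1 + j * l"
        using steps by blast
      then have "i = j" using shift_step_multiples_cong_imp_eq[OF \<beta> I(1) I(1)] cong by simp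
      then show ?thesis using \<Delta> by simp
    qed
  qed (fact l(1))
  then show ?thesis by (simp add: I_def image_image)
qed

end

theorem theorem2:
  fixes p l q :: nat and P :: "(nat \<Rightarrow> nat) set"
  assumes "prime p" and "1 \<le> l" and "l dvd (p - 1)" and "q = p * l"
    and "P = (\<lambda>i. omega q (1 + i * l)) ` ({0..<p} - {(p - 1) div l})"
  shows "inj_on (\<lambda>i. omega q (1 + i * l)) ({0..<p} - {(p - 1) div l})
    \<and> (\<forall>\<sigma>\<in>P. cyclic_perm q \<sigma>)
    \<and> proper_set q l P
    \<and> card P = p - 1
    \<and> p - 1 = (p * l - 1) div l
    \<and> (\<forall>Q. proper_set q l Q \<longrightarrow> card Q \<le> (q - 1) div l)
    \<and> quasiperfect q l P"
proof -
  have proper: "proper_set q l P"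
    unfolding assms(4,5) using assms(1-3) by (rule proper_set_shift_family)
  then have cyclic: "\<forall>\<sigma>\<in>P. cyclic_perm q \<sigma>" by (simp add: proper_set_def)
  have card: "card P = p - 1"
    unfolding assms(4,5) using assms(1-3) by (rule card_shift_family)
  have quotient: "p - 1 = (p * l - 1) div l"
    using prime_gt_0_nat[OF assms(1)] assms(2) by (intro mult_minus_one_div[symmetric]) auto
  have "quasiperfect q l P" using proper card quotient assms(4) by (simp add: quasiperfect_def)
  then show ?thesis
    using inj_on_shift_family[OF assms(1-3)] cyclic proper card quotient proper_set_card_le
    unfolding assms(4) by blast
qed

end
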